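(* Let $G=(V,E)$ be a finite undirected graph and $k$ a positive integer. Then \[ \mathcal{F}(G,k)\;\cong\; G^{\square k}/\pi, \] where $\pi$ is the equitable partition of $G^{\square k}$ whose cells are the orbits $\mathcal{O}_x=\{y\in V^k:\exists\sigma\in S_k,\ \sigma(x)=y\}$ of the symmetric group $S_k$ acting on $V^k$ by $\sigma(x_1,\dots,x_k)=(x_{\sigma(1)},\dots,x_{\sigma(k)})$. Moreover, if $G$ has perfect state transfer, then so does $\mathcal{F}(G,k)$, for every positive integer $k$.
   Context: Feder's secondary graph $\mathcal{F}(G,k)$ is the weighted graph whose vertices are the vectors $(n_u)_{u\in V}$ of nonnegative integers with $\sum_{u\in V}n_u=k$ (occupation numbers of $k$ bosons), where, for each edge $\{u,v\}$ of $G$ and each such vector $n$ with $n_u\ge1$, the vertex $n$ is joined to the vertex $n'$ obtained from $n$ by decreasing $n_u$ by one and increasing $n_v$ by one, with edge weight $\sqrt{n_u(n_v+1)}$. $G^{\square k}$ is the $k$-fold Cartesian product of $G$ (vertex set $V^k$, two $k$-tuples adjacent iff they differ in exactly one coordinate, in which the entries are adjacent in $G$). For an equitable partition $\pi=V_1\uplus\cdots\uplus V_m$ (each vertex of $V_j$ has exactly $d_{j,k}$ neighbours in $V_k$), the quotient $G/\pi$ is the weighted graph on the cells with adjacency matrix entries $\sqrt{d_{j,k}d_{k,j}}$. A weighted graph with adjacency matrix $A$ has perfect state transfer if there are vertices $u,v$ and a time $t$ with $|\langle v|e^{-itA}|u\rangle|=1$. *)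

theory Defs
  imports "HOL-Analysis.Analysis" "HOL-Combinatorics.Permutations"
begin

definition simple_graph :: "'a set \<Rightarrow> ('a \<Rightarrow> 'a \<Rightarrow> bool) \<Rightarrow> bool" where
  "simple_graph V E \<longleftrightarrow> finite V \<and> (\<forall>u v. E u v \<longrightarrow> u \<in> V \<and> v \<in> V)
     \<and> (\<forall>u v. E u v \<longrightarrow> E v u) \<and> (\<forall>u. \<not> E u u)"

definition graph_adj :: "('a \<Rightarrow> 'a \<Rightarrow> bool) \<Rightarrow> 'a \<Rightarrow> 'a \<Rightarrow> real" where
  "graph_adj E u v = (if E u v then 1 else 0)"

definition wiso :: "'b set \<Rightarrow> ('b \<Rightarrow> 'b \<Rightarrow> real) \<Rightarrow> 'c set \<Rightarrow> ('c \<Rightarrow> 'c \<Rightarrow> real) \<Rightarrow> bool" where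
  "wiso W1 A1 W2 A2 \<longleftrightarrow> (\<exists>f. bij_betw f W1 W2 \<and> (\<forall>x\<in>W1. \<forall>y\<in>W1. A2 (f x) (f y) = A1 x y))"

fun mpow :: "'b set \<Rightarrow> ('b \<Rightarrow> 'b \<Rightarrow> real) \<Rightarrow> nat \<Rightarrow> 'b \<Rightarrow> 'b \<Rightarrow> real" where
  "mpow W A 0 v u = (if v = u then 1 else 0)"
| "mpow W A (Suc n) v u = (\<Sum>x\<in>W. A v x * mpow W A n x u)"

text \<open>The entry  <v| exp(-itA) |u>  given by the exponential series.\<close>
definition transition :: "'b set \<Rightarrow> ('b \<Rightarrow> 'b \<Rightarrow> real) \<Rightarrow> real \<Rightarrow> 'b \<Rightarrow> 'b \<Rightarrow> complex" where
  "transition W A t v u =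
     (\<Sum>n. (- \<i> * complex_of_real t) ^ n / of_nat (fact n) * complex_of_real (mpow W A n v u))"

definition pst :: "'b set \<Rightarrow> ('b \<Rightarrow> 'b \<Rightarrow> real) \<Rightarrow> bool" where
  "pst W A \<longleftrightarrow> (\<exists>u\<in>W. \<exists>v\<in>W. u \<noteq> v \<and> (\<exists>t::real. cmod (transition W A t v u) = 1))"

text \<open>Feder's secondary graph F(G,k): occupation-number vectors supported on V summing to k.\<close>
definition feder_verts :: "'a set \<Rightarrow> nat \<Rightarrow> ('a \<Rightarrow> nat) set" where
  "feder_verts V k = {n. (\<forall>x. x \<notin> V \<longrightarrow> n x = 0) \<and> (\<Sum>x\<in>V. n x) = k}"

definition feder_adj :: "'a set \<Rightarrow> ('a \<Rightarrow> 'a \<Rightarrow> bool) \<Rightarrow> ('a \<Rightarrow> nat) \<Rightarrow> ('a \<Rightarrow> nat) \<Rightarrow> real" where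
  "feder_adj V E n n' =
     (\<Sum>(u,v)\<in>{(u,v). u \<in> V \<and> v \<in> V \<and> E u v \<and> 1 \<le> n u \<and> n' = n(u := n u - 1, v := n v + 1)}.
        sqrt (real (n u * (n v + 1))))"

definition cart_pow_verts :: "'a set \<Rightarrow> nat \<Rightarrow> 'a list set" where
  "cart_pow_verts V k = {xs. set xs \<subseteq> V \<and> length xs = k}"

definition cart_pow_adj :: "('a \<Rightarrow> 'a \<Rightarrow> bool) \<Rightarrow> nat \<Rightarrow> 'a list \<Rightarrow> 'a list \<Rightarrow> bool" where
  "cart_pow_adj E k xs ys \<longleftrightarrow> length xs = k \<and> length ys = k \<and>
     (\<exists>i<k. E (xs ! i) (ys ! i) \<and> (\<forall>j<k. j \<noteq> i \<longrightarrow> xs ! j = ys ! j))"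

definition sym_orbit :: "'a set \<Rightarrow> nat \<Rightarrow> 'a list \<Rightarrow> 'a list set" where
  "sym_orbit V k x = {y \<in> cart_pow_verts V k.
       \<exists>\<sigma>. \<sigma> permutes {..<k} \<and> y = map (\<lambda>i. x ! \<sigma> i) [0..<k]}"

definition orbit_partition :: "'a set \<Rightarrow> nat \<Rightarrow> 'a list set set" where
  "orbit_partition V k = sym_orbit V k ` cart_pow_verts V k"

definition nbr_count :: "('b \<Rightarrow> 'b \<Rightarrow> bool) \<Rightarrow> 'b \<Rightarrow> 'b set \<Rightarrow> nat" where
  "nbr_count adj x D = card {y \<in> D. adj x y}"

definition equitable :: "'b set \<Rightarrow> ('b \<Rightarrow> 'b \<Rightarrow> bool) \<Rightarrow> 'b set set \<Rightarrow> bool" where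
  "equitable X adj P \<longleftrightarrow>
     \<Union>P = X \<and> (\<forall>C\<in>P. C \<noteq> {}) \<and> (\<forall>C\<in>P. \<forall>D\<in>P. C \<noteq> D \<longrightarrow> C \<inter> D = {}) \<and>
     (\<forall>C\<in>P. \<forall>D\<in>P. \<forall>x\<in>C. \<forall>x'\<in>C. nbr_count adj x D = nbr_count adj x' D)"

definition quot_adj :: "('b \<Rightarrow> 'b \<Rightarrow> bool) \<Rightarrow> 'b set \<Rightarrow> 'b set \<Rightarrow> real" where
  "quot_adj adj C D =
     sqrt (real (nbr_count adj (SOME x. x \<in> C) D * nbr_count adj (SOME y. y \<in> D) C))"

end

theory Submission
  imports Defs
begin

text \<open>Labelling the k bosons turns them into a single token on the Cartesian power G^k, and
  forgetting the labels maps a k-tuple to its occupation-number vector, whose fibres are the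
  S_k-orbits. Moving one token from u to v takes a tuple x to exactly n_u tuples of the target
  orbit, and the reverse move takes a tuple there to n_v + 1 tuples of the orbit of x; so the
  orbit partition is equitable and its symmetrised quotient has entries sqrt(n_u (n_v + 1)),
  which is F(G,k). Conjugated by the diagonal matrix sqrt(prod n_a!), this quotient becomes the
  matrix of neighbour counts, whose powers sum the walk counts of G^k over a target orbit. The
  orbits of constant tuples are singletons of equal weight sqrt(k!), so the amplitude of F(G,k)
  from k bosons at u to k bosons at v is that of G^k from (u,...,u) to (v,...,v); and since the
  adjacency matrix of G^k is a Kronecker sum, this is the k-th power of the amplitude of G.\<close>

section \<open>Matrix powers and quantum walks\<close>

lemma mpow_reindex:
  assumes f: "bij_betw f W1 W2" and A: "\<And>x y. x \<in> W1 \<Longrightarrow> y \<in> W1 \<Longrightarrow> A2 (f x) (f y) = A1 x y"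
    and x: "x \<in> W1" and y: "y \<in> W1"
  shows "mpow W2 A2 n (f x) (f y) = mpow W1 A1 n x y"
  using x
proof (induction n arbitrary: x)
  case 0
  then show ?case using bij_betw_imp_inj_on[OF f] y by (auto dest: inj_onD)
next
  case (Suc n)
  have "mpow W2 A2 (Suc n) (f x) (f y) = (\<Sum>z\<in>W1. A2 (f x) (f z) * mpow W2 A2 n (f z) (f y))"
    by (simp add: sum.reindex_bij_betw[OF f, symmetric])
  also have "\<dots> = mpow W1 A1 (Suc n) x y"
    using Suc by (simp add: A)
  finally show ?case .
qed

lemma transition_reindex:
  assumes "bij_betw f W1 W2" "\<And>x y. x \<in> W1 \<Longrightarrow> y \<in> W1 \<Longrightarrow> A2 (f x) (f y) = A1 x y"
    "x \<in> W1" "y \<in> W1"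
  shows "transition W2 A2 t (f x) (f y) = transition W1 A1 t x y"
  unfolding transition_def using mpow_reindex[of f W1 W2 A2 A1, OF assms] by simp

lemma abs_mpow_le:
  assumes "finite W" "v \<in> W"
  shows "\<bar>mpow W A n v u\<bar> \<le> (\<Sum>w\<in>W. \<Sum>x\<in>W. \<bar>A w x\<bar>) ^ n"
  using assms(2)
proof (induction n arbitrary: v)
  case 0
  then show ?case by simp
next
  case (Suc n)
  define S where "S = (\<Sum>w\<in>W. \<Sum>x\<in>W. \<bar>A w x\<bar>)"
  have row: "(\<Sum>x\<in>W. \<bar>A v x\<bar>) \<le> S"
    unfolding S_def using assms(1) Suc.prems
    by (intro member_le_sum[where f="\<lambda>w. \<Sum>x\<in>W. \<bar>A w x\<bar>"]) (auto intro: sum_nonneg)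
  have "\<bar>mpow W A (Suc n) v u\<bar> \<le> (\<Sum>x\<in>W. \<bar>A v x\<bar> * \<bar>mpow W A n x u\<bar>)"
    by (simp add: sum_abs[THEN order_trans] abs_mult)
  also have "\<dots> \<le> (\<Sum>x\<in>W. \<bar>A v x\<bar> * S ^ n)"
    using Suc.IH by (intro sum_mono mult_left_mono) (auto simp: S_def)
  also have "\<dots> \<le> S * S ^ n"
    using row by (simp add: sum_distrib_right[symmetric] mult_right_mono S_def sum_nonneg)
  finally show ?case by (simp add: S_def)
qed

definition transition_term :: "'b set \<Rightarrow> ('b \<Rightarrow> 'b \<Rightarrow> real) \<Rightarrow> real \<Rightarrow> 'b \<Rightarrow> 'b \<Rightarrow> nat \<Rightarrow> complex" where
  "transition_term W A t v u n =
     (- \<i> * complex_of_real t) ^ n / of_nat (fact n) * complex_of_real (mpow W A n v u)"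

lemma transition_eq_suminf: "transition W A t v u = (\<Sum>n. transition_term W A t v u n)"
  by (simp add: transition_def transition_term_def)

lemma summable_norm_transition_term:
  assumes "finite W" "v \<in> W"
  shows "summable (\<lambda>n. norm (transition_term W A t v u n))"
proof (rule summable_comparison_test)
  define S where "S = (\<Sum>w\<in>W. \<Sum>x\<in>W. \<bar>A w x\<bar>)"
  show "summable (\<lambda>n. inverse (fact n) * (\<bar>t\<bar> * S) ^ n)" by (rule summable_exp)
  show "\<exists>N. \<forall>n\<ge>N. norm (norm (transition_term W A t v u n)) \<le> inverse (fact n) * (\<bar>t\<bar> * S) ^ n"
  proof (intro exI allI impI)
    fix n
    have "norm (transition_term W A t v u n) = \<bar>t\<bar> ^ n / fact n * \<bar>mpow W A n v u\<bar>"
      by (simp add: transition_term_def norm_mult norm_divide norm_power)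
    also have "\<dots> \<le> \<bar>t\<bar> ^ n / fact n * S ^ n"
      using abs_mpow_le[OF assms] by (intro mult_left_mono) (auto simp: S_def)
    finally show "norm (norm (transition_term W A t v u n)) \<le> inverse (fact n) * (\<bar>t\<bar> * S) ^ n"
      by (simp add: power_mult_distrib field_simps)
  qed
qed

definition kronecker_sum :: "('b \<Rightarrow> 'b \<Rightarrow> real) \<Rightarrow> ('c \<Rightarrow> 'c \<Rightarrow> real) \<Rightarrow> 'b \<times> 'c \<Rightarrow> 'b \<times> 'c \<Rightarrow> real" where
  "kronecker_sum A B = (\<lambda>(a, x) (c, z). A a c * (if x = z then 1 else 0) + (if a = c then 1 else 0) * B x z)"

lemma sum_choose_Suc_split:
  fixes f g :: "nat \<Rightarrow> real"
  shows "(\<Sum>j\<le>Suc m. real (Suc m choose j) * f j * g (Suc m - j))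
    = (\<Sum>j\<le>m. real (m choose j) * f (Suc j) * g (m - j))
    + (\<Sum>j\<le>m. real (m choose j) * f j * g (Suc (m - j)))"
proof -
  define h where "h j = f j * g (Suc m - j)" for j
  have "(\<Sum>j\<le>Suc m. real (Suc m choose j) * f j * g (Suc m - j))
      = h 0 + (\<Sum>j\<le>m. real (m choose Suc j) * h (Suc j)) + (\<Sum>j\<le>m. real (m choose j) * h (Suc j))"
    by (subst sum.atMost_Suc_shift) (simp add: h_def mult.assoc sum.distrib algebra_simps)
  also have "h 0 + (\<Sum>j\<le>m. real (m choose Suc j) * h (Suc j)) = (\<Sum>j\<le>Suc m. real (m choose j) * h j)"
    by (subst sum.atMost_Suc_shift) simp
  also have "\<dots> = (\<Sum>j\<le>m. real (m choose j) * h j)"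
    by simp
  finally show ?thesis
    by (simp add: h_def mult.assoc Suc_diff_le algebra_simps)
qed

lemma mpow_kronecker_sum:
  assumes fin: "finite W1" "finite W2" and a: "a \<in> W1" and x: "x \<in> W2"
  shows "mpow (W1 \<times> W2) (kronecker_sum A B) m (a, x) (b, y)
    = (\<Sum>j\<le>m. real (m choose j) * mpow W1 A j a b * mpow W2 B (m - j) x y)"
  using a x
proof (induction m arbitrary: a x)
  case 0
  then show ?case by simp
next
  case (Suc m)
  define M where "M w = mpow (W1 \<times> W2) (kronecker_sum A B) m w (b, y)" for w
  define f where "f j = mpow W1 A j a b" for j
  define g where "g i = mpow W2 B i x y" for i
  have "mpow (W1 \<times> W2) (kronecker_sum A B) (Suc m) (a, x) (b, y)
      = (\<Sum>(c, z)\<in>W1 \<times> W2. kronecker_sum A B (a, x) (c, z) * M (c, z))"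
    by (simp add: M_def)
  also have "\<dots> = (\<Sum>c\<in>W1. \<Sum>z\<in>W2. kronecker_sum A B (a, x) (c, z) * M (c, z))"
    by (rule sum.cartesian_product[symmetric])
  also have "\<dots> = (\<Sum>c\<in>W1. \<Sum>z\<in>W2. A a c * (if x = z then M (c, z) else 0) + (if a = c then B x z * M (c, z) else 0))"
    by (intro sum.cong refl) (simp add: kronecker_sum_def algebra_simps)
  also have "\<dots> = (\<Sum>c\<in>W1. A a c * M (c, x)) + (\<Sum>z\<in>W2. B x z * M (a, z))"
    using Suc.prems fin by (simp add: sum.distrib sum.delta if_distrib[of "(*) _"] cong: if_cong)
      (subst sum.swap, simp add: sum.delta)
  also have "(\<Sum>c\<in>W1. A a c * M (c, x)) = (\<Sum>j\<le>m. real (m choose j) * f (Suc j) * g (m - j))"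
  proof -
    have "(\<Sum>c\<in>W1. A a c * M (c, x))
        = (\<Sum>c\<in>W1. \<Sum>j\<le>m. real (m choose j) * (A a c * mpow W1 A j c b) * g (m - j))"
      using Suc.IH Suc.prems by (intro sum.cong refl) (simp add: M_def sum_distrib_left g_def mult_ac)
    also have "\<dots> = (\<Sum>j\<le>m. real (m choose j) * (\<Sum>c\<in>W1. A a c * mpow W1 A j c b) * g (m - j))"
      by (subst sum.swap) (simp add: sum_distrib_left sum_distrib_right)
    finally show ?thesis by (simp add: f_def)
  qed
  also have "(\<Sum>z\<in>W2. B x z * M (a, z)) = (\<Sum>j\<le>m. real (m choose j) * f j * g (Suc (m - j)))"
  proof -
    have "(\<Sum>z\<in>W2. B x z * M (a, z))
        = (\<Sum>z\<in>W2. \<Sum>j\<le>m. real (m choose j) * f j * (B x z * mpow W2 B (m - j) z y))"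
      using Suc.IH Suc.prems by (intro sum.cong refl) (simp add: M_def sum_distrib_left f_def mult_ac)
    also have "\<dots> = (\<Sum>j\<le>m. real (m choose j) * f j * (\<Sum>z\<in>W2. B x z * mpow W2 B (m - j) z y))"
      by (subst sum.swap) (simp add: sum_distrib_left)
    finally show ?thesis by (simp add: g_def)
  qed
  also have "(\<Sum>j\<le>m. real (m choose j) * f (Suc j) * g (m - j))
      + (\<Sum>j\<le>m. real (m choose j) * f j * g (Suc (m - j)))
      = (\<Sum>j\<le>Suc m. real (Suc m choose j) * f j * g (Suc m - j))"
    by (rule sum_choose_Suc_split[symmetric])
  finally show ?case
    by (simp add: f_def g_def)
qed

lemma power_div_fact_choose:
  fixes c :: complex
  assumes "j \<le> n"
  shows "c ^ n / of_nat (fact n) * of_real (real (n choose j))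
       = c ^ j / of_nat (fact j) * (c ^ (n - j) / of_nat (fact (n - j)))"
proof -
  have "of_real (real (n choose j)) = (fact n / (fact j * fact (n - j)) :: complex)"
    using binomial_fact[OF assms] by simp
  moreover have "c ^ n = c ^ j * c ^ (n - j)"
    using assms by (simp flip: power_add)
  ultimately show ?thesis by (simp add: field_simps)
qed

lemma transition_kronecker_sum:
  assumes fin: "finite W1" "finite W2" and a: "a \<in> W1" and x: "x \<in> W2"
  shows "transition (W1 \<times> W2) (kronecker_sum A B) t (a, x) (b, y)
    = transition W1 A t a b * transition W2 B t x y"
proof -
  define c where "c = - \<i> * complex_of_real t"
  have "transition W1 A t a b * transition W2 B t x y
      = (\<Sum>n. \<Sum>j\<le>n. transition_term W1 A t a b j * transition_term W2 B t x y (n - j))"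
    unfolding transition_eq_suminf
    by (rule Cauchy_product[OF summable_norm_transition_term[OF fin(1) a]
          summable_norm_transition_term[OF fin(2) x]])
  also have "\<dots> = (\<Sum>n. transition_term (W1 \<times> W2) (kronecker_sum A B) t (a, x) (b, y) n)"
  proof (intro arg_cong[where f=suminf] ext)
    fix n
    have "transition_term (W1 \<times> W2) (kronecker_sum A B) t (a, x) (b, y) n
       = (\<Sum>j\<le>n. (c ^ n / of_nat (fact n) * of_real (real (n choose j)))
             * (of_real (mpow W1 A j a b) * of_real (mpow W2 B (n - j) x y)))"
      by (simp add: transition_term_def mpow_kronecker_sum[OF fin a x] sum_distrib_left c_def mult.assoc)
    also have "\<dots> = (\<Sum>j\<le>n. transition_term W1 A t a b j * transition_term W2 B t x y (n - j))"
    proof (intro sum.cong refl)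
      fix j assume "j \<in> {..n}"
      then have "c ^ n / of_nat (fact n) * of_real (real (n choose j))
          = c ^ j / of_nat (fact j) * (c ^ (n - j) / of_nat (fact (n - j)))"
        by (intro power_div_fact_choose) simp
      then show "(c ^ n / of_nat (fact n) * of_real (real (n choose j)))
             * (of_real (mpow W1 A j a b) * of_real (mpow W2 B (n - j) x y))
          = transition_term W1 A t a b j * transition_term W2 B t x y (n - j)"
        by (simp only: transition_term_def c_def[symmetric] mult_ac)
    qed
    finally show "(\<Sum>j\<le>n. transition_term W1 A t a b j * transition_term W2 B t x y (n - j))
      = transition_term (W1 \<times> W2) (kronecker_sum A B) t (a, x) (b, y) n" by simp
  qed
  finally show ?thesis by (simp add: transition_eq_suminf)
qed

lemma mpow_lumping:
  fixes \<pi> :: "'c \<Rightarrow> 'b" and w :: "'b \<Rightarrow> real"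
  assumes fin: "finite W2" and W1: "W1 = \<pi> ` W2" and w: "\<And>p. p \<in> W1 \<Longrightarrow> w p \<noteq> 0"
    and lump: "\<And>x p. x \<in> W2 \<Longrightarrow> p \<in> W1 \<Longrightarrow>
       (\<Sum>z\<in>{z\<in>W2. \<pi> z = p}. A2 x z) = A1 (\<pi> x) p * w (\<pi> x) / w p"
    and x: "x \<in> W2" and q: "q \<in> W1"
  shows "(\<Sum>y\<in>{y\<in>W2. \<pi> y = q}. mpow W2 A2 m x y) = mpow W1 A1 m (\<pi> x) q * w (\<pi> x) / w q"
  using x
proof (induction m arbitrary: x)
  case 0
  have "\<pi> x \<in> W1" using 0 W1 by blast
  then show ?case using 0 fin w q by (simp add: sum.delta)
next
  case (Suc m)
  have fin1: "finite W1" using W1 fin by simp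
  define g where "g p = mpow W1 A1 m p q * w p / w q" for p
  have "(\<Sum>y\<in>{y\<in>W2. \<pi> y = q}. mpow W2 A2 (Suc m) x y)
      = (\<Sum>z\<in>W2. A2 x z * (\<Sum>y\<in>{y\<in>W2. \<pi> y = q}. mpow W2 A2 m z y))"
    by (simp add: sum_distrib_left) (rule sum.swap)
  also have "\<dots> = (\<Sum>z\<in>W2. A2 x z * g (\<pi> z))"
    using Suc.IH by (intro sum.cong) (auto simp: g_def)
  also have "\<dots> = (\<Sum>p\<in>W1. (\<Sum>z\<in>{z\<in>W2. \<pi> z = p}. A2 x z) * g p)"
    by (subst sum.group[symmetric, where g="\<pi>" and T=W1])
       (use fin fin1 W1 in \<open>auto simp: sum_distrib_right intro!: sum.cong\<close>)
  also have "\<dots> = (\<Sum>p\<in>W1. A1 (\<pi> x) p * mpow W1 A1 m p q * (w (\<pi> x) / w q))"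
    using lump[OF Suc.prems] w by (intro sum.cong refl) (simp add: g_def)
  also have "\<dots> = (\<Sum>p\<in>W1. A1 (\<pi> x) p * mpow W1 A1 m p q) * w (\<pi> x) / w q"
    by (simp add: sum_distrib_right sum_divide_distrib)
  finally show ?case by simp
qed

section \<open>Cartesian powers\<close>

lemma finite_cart_pow_verts: "finite V \<Longrightarrow> finite (cart_pow_verts V k)"
  by (simp add: cart_pow_verts_def finite_lists_length_eq)

lemma bij_betw_Cons_cart_pow_verts:
  "bij_betw (\<lambda>(c, z). c # z) (V \<times> cart_pow_verts V k) (cart_pow_verts V (Suc k))"
proof (rule bij_betw_imageI)
  show "inj_on (\<lambda>(c, z). c # z) (V \<times> cart_pow_verts V k)"
    by (auto simp: inj_on_def)
  show "(\<lambda>(c, z). c # z) ` (V \<times> cart_pow_verts V k) = cart_pow_verts V (Suc k)"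
  proof (rule set_eqI)
    fix w
    show "w \<in> (\<lambda>(c, z). c # z) ` (V \<times> cart_pow_verts V k) \<longleftrightarrow> w \<in> cart_pow_verts V (Suc k)"
      by (cases w) (auto simp: cart_pow_verts_def)
  qed
qed

lemma cart_pow_adj_Cons_iff:
  assumes "length x = k" "length z = k"
  shows "cart_pow_adj E (Suc k) (a # x) (c # z) \<longleftrightarrow> (E a c \<and> x = z) \<or> (a = c \<and> cart_pow_adj E k x z)"
proof
  assume "cart_pow_adj E (Suc k) (a # x) (c # z)"
  then obtain i where i: "i < Suc k" "E ((a # x) ! i) ((c # z) ! i)"
    and same: "\<forall>j<Suc k. j \<noteq> i \<longrightarrow> (a # x) ! j = (c # z) ! j"
    by (auto simp: cart_pow_adj_def)
  show "(E a c \<and> x = z) \<or> (a = c \<and> cart_pow_adj E k x z)"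
  proof (cases i)
    case 0
    have "x = z"
      using assms same by (intro nth_equalityI) (auto simp: 0 dest: spec[of _ "Suc _"])
    then show ?thesis using i 0 by simp
  next
    case (Suc i')
    have "a = c" using same Suc by (auto dest: spec[of _ 0])
    moreover have "cart_pow_adj E k x z"
      unfolding cart_pow_adj_def using assms i same Suc by (auto intro!: exI[of _ i'])
    ultimately show ?thesis by simp
  qed
next
  assume "(E a c \<and> x = z) \<or> (a = c \<and> cart_pow_adj E k x z)"
  then show "cart_pow_adj E (Suc k) (a # x) (c # z)"
  proof
    assume "E a c \<and> x = z"
    then show ?thesis using assms unfolding cart_pow_adj_def
      by (intro conjI exI[of _ 0]) (auto simp: nth_Cons split: nat.splits)
  next
    assume "a = c \<and> cart_pow_adj E k x z"
    then obtain i where "a = c" "i < k" "E (x ! i) (z ! i)" "\<forall>j<k. j \<noteq> i \<longrightarrow> x ! j = z ! j"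
      by (auto simp: cart_pow_adj_def)
    then show ?thesis using assms unfolding cart_pow_adj_def
      by (intro conjI exI[of _ "Suc i"]) (auto simp: nth_Cons split: nat.splits)
  qed
qed

lemma cart_pow_adj_iff_list_update:
  assumes "length x = k" "length y = k"
  shows "cart_pow_adj E k x y \<longleftrightarrow> (\<exists>i<k. E (x ! i) (y ! i) \<and> y = x[i := y ! i])"
proof
  assume "cart_pow_adj E k x y"
  then obtain i where i: "i < k" "E (x ! i) (y ! i)" "\<forall>j<k. j \<noteq> i \<longrightarrow> x ! j = y ! j"
    by (auto simp: cart_pow_adj_def)
  then have "y = x[i := y ! i]"
    using assms by (intro nth_equalityI) (auto simp: nth_list_update)
  then show "\<exists>i<k. E (x ! i) (y ! i) \<and> y = x[i := y ! i]" using i by blast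
next
  assume "\<exists>i<k. E (x ! i) (y ! i) \<and> y = x[i := y ! i]"
  then obtain i where "i < k" "E (x ! i) (y ! i)" "y = x[i := y ! i]" by blast
  then show "cart_pow_adj E k x y"
    using assms by (auto simp: cart_pow_adj_def) (metis nth_list_update_neq)
qed

text \<open>Irreflexivity makes the two ways of being adjacent exclusive, so the 0/1 matrix of
  G^(k+1) is the Kronecker sum of those of G and G^k.\<close>
lemma graph_adj_cart_pow_Cons:
  assumes irrefl: "\<And>a. \<not> E a a" and "length x = k" "length z = k"
  shows "graph_adj (cart_pow_adj E (Suc k)) (a # x) (c # z)
     = kronecker_sum (graph_adj E) (graph_adj (cart_pow_adj E k)) (a, x) (c, z)"
proof -
  have "\<not> cart_pow_adj E k x x"
    using irrefl by (auto simp: cart_pow_adj_def)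
  then show ?thesis
    using cart_pow_adj_Cons_iff[OF assms(2,3)] irrefl[of a]
    by (auto simp: graph_adj_def kronecker_sum_def)
qed

lemma transition_cart_pow_replicate:
  assumes fin: "finite V" and irrefl: "\<And>a. \<not> E a a" and u: "u \<in> V" and v: "v \<in> V"
  shows "transition (cart_pow_verts V k) (graph_adj (cart_pow_adj E k)) t (replicate k v) (replicate k u)
    = transition V (graph_adj E) t v u ^ k"
proof (induction k)
  case 0
  have "mpow (cart_pow_verts V 0) (graph_adj (cart_pow_adj E 0)) n [] [] = (if n = 0 then 1 else 0)" for n
    by (cases n) (simp_all add: graph_adj_def cart_pow_adj_def)
  then have "(\<lambda>n. transition_term (cart_pow_verts V 0) (graph_adj (cart_pow_adj E 0)) t [] [] n)
      = (\<lambda>n. if n = 0 then 1 else 0)"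
    by (auto simp: transition_term_def fun_eq_iff)
  then show ?case
    using sums_single[of 0 "\<lambda>_. 1::complex"] by (simp add: transition_eq_suminf sums_iff)
next
  case (Suc k)
  let ?W = "cart_pow_verts V k" and ?B = "graph_adj (cart_pow_adj E k)"
  have rep: "replicate k v \<in> ?W" "replicate k u \<in> ?W"
    using u v by (auto simp: cart_pow_verts_def)
  have "transition (cart_pow_verts V (Suc k)) (graph_adj (cart_pow_adj E (Suc k))) t
          ((\<lambda>(c, z). c # z) (v, replicate k v)) ((\<lambda>(c, z). c # z) (u, replicate k u))
      = transition (V \<times> ?W) (kronecker_sum (graph_adj E) ?B) t (v, replicate k v) (u, replicate k u)"
    using rep u v
    by (intro transition_reindex bij_betw_Cons_cart_pow_verts)
       (auto simp: graph_adj_cart_pow_Cons[OF irrefl] cart_pow_verts_def)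
  also have "\<dots> = transition V (graph_adj E) t v u * transition ?W ?B t (replicate k v) (replicate k u)"
    using fin v rep by (intro transition_kronecker_sum finite_cart_pow_verts)
  finally show ?case using Suc by simp
qed

section \<open>Occupation numbers and the orbit partition\<close>

definition occupation :: "'a list \<Rightarrow> 'a \<Rightarrow> nat" where
  "occupation xs = count (mset xs)"

definition occupation_class :: "'a set \<Rightarrow> nat \<Rightarrow> ('a \<Rightarrow> nat) \<Rightarrow> 'a list set" where
  "occupation_class V k n = {y \<in> cart_pow_verts V k. occupation y = n}"

lemma sym_orbit_eq_occupation_class:
  assumes "x \<in> cart_pow_verts V k"
  shows "sym_orbit V k x = occupation_class V k (occupation x)"
proof -
  have len: "length x = k" using assms by (simp add: cart_pow_verts_def)
  have "(\<exists>\<sigma>. \<sigma> permutes {..<k} \<and> y = map (\<lambda>i. x ! \<sigma> i) [0..<k]) \<longleftrightarrow> mset y = mset x" for y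
  proof
    assume "\<exists>\<sigma>. \<sigma> permutes {..<k} \<and> y = map (\<lambda>i. x ! \<sigma> i) [0..<k]"
    then obtain \<sigma> where "\<sigma> permutes {..<length x}" "y = permute_list \<sigma> x"
      using len by (auto simp: permute_list_def)
    then show "mset y = mset x" by simp
  next
    assume "mset y = mset x"
    then obtain \<sigma> where "\<sigma> permutes {..<length x}" "permute_list \<sigma> x = y"
      by (metis mset_eq_permutation)
    then show "\<exists>\<sigma>. \<sigma> permutes {..<k} \<and> y = map (\<lambda>i. x ! \<sigma> i) [0..<k]"
      using len by (auto simp: permute_list_def)
  qed
  then show ?thesis
    by (auto simp: sym_orbit_def occupation_class_def occupation_def multiset_eq_iff fun_eq_iff)
qed

lemma occupation_in_feder_verts:
  assumes "finite V" "x \<in> cart_pow_verts V k"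
  shows "occupation x \<in> feder_verts V k"
proof -
  have "set x \<subseteq> V" "length x = k" using assms by (auto simp: cart_pow_verts_def)
  then show ?thesis using assms(1)
    by (auto simp: feder_verts_def occupation_def count_mset sum_count_set count_list_0_iff)
qed

lemma feder_verts_eq_image_occupation:
  assumes "finite V"
  shows "feder_verts V k = occupation ` cart_pow_verts V k"
proof (intro equalityI subsetI)
  fix n assume n: "n \<in> feder_verts V k"
  obtain xs where xs: "mset xs = (\<Sum>a\<in>V. replicate_mset (n a) a)"
    using ex_mset by blast
  have occ: "occupation xs = n"
    using assms n by (auto simp: occupation_def xs count_sum feder_verts_def fun_eq_iff sum.delta')
  have "length xs = k"
    using n xs by (simp add: feder_verts_def flip: size_mset)
  moreover have "set xs \<subseteq> V"
    using n occ by (auto simp: occupation_def feder_verts_def simp flip: count_greater_zero_iff)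
  ultimately show "n \<in> occupation ` cart_pow_verts V k"
    using occ by (auto simp: cart_pow_verts_def)
qed (use occupation_in_feder_verts[OF assms] in blast)

lemma occupation_class_nonempty:
  "finite V \<Longrightarrow> n \<in> feder_verts V k \<Longrightarrow> occupation_class V k n \<noteq> {}"
  by (auto simp: occupation_class_def feder_verts_eq_image_occupation)

lemma orbit_partition_eq_occupation_classes:
  assumes "finite V"
  shows "orbit_partition V k = occupation_class V k ` feder_verts V k"
  unfolding orbit_partition_def feder_verts_eq_image_occupation[OF assms] image_image
  by (intro image_cong refl) (rule sym_orbit_eq_occupation_class)

lemma occupation_list_update:
  assumes "i < length x" "x ! i \<noteq> v"
  shows "occupation (x[i := v]) = (occupation x)(x ! i := occupation x (x ! i) - 1, v := occupation x v + 1)"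
  using assms by (auto simp: occupation_def mset_update fun_eq_iff)

lemma occupation_nth_pos: "i < length x \<Longrightarrow> 1 \<le> occupation x (x ! i)"
  by (simp add: occupation_def Suc_le_eq)

lemma card_occupation_eq: "card {i. i < length x \<and> x ! i = u} = occupation x u"
  by (simp add: occupation_def count_mset count_list_eq_length_filter length_filter_conv_card eq_commute)

definition boson_moves :: "'a set \<Rightarrow> ('a \<Rightarrow> 'a \<Rightarrow> bool) \<Rightarrow> ('a \<Rightarrow> nat) \<Rightarrow> ('a \<Rightarrow> nat) \<Rightarrow> ('a \<times> 'a) set" where
  "boson_moves V E n p = {(u, v). u \<in> V \<and> v \<in> V \<and> E u v \<and> 1 \<le> n u \<and> p = n(u := n u - 1, v := n v + 1)}"

definition move_count :: "'a set \<Rightarrow> ('a \<Rightarrow> 'a \<Rightarrow> bool) \<Rightarrow> ('a \<Rightarrow> nat) \<Rightarrow> ('a \<Rightarrow> nat) \<Rightarrow> nat" where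
  "move_count V E n p = (\<Sum>(u, v)\<in>boson_moves V E n p. n u)"

lemma feder_adj_eq_sum_boson_moves:
  "feder_adj V E n p = (\<Sum>(u, v)\<in>boson_moves V E n p. sqrt (real (n u * (n v + 1))))"
  by (simp add: feder_adj_def boson_moves_def)

lemma boson_move_unique:
  assumes G: "simple_graph V E" and uv: "(u, v) \<in> boson_moves V E n p" and ab: "(a, b) \<in> boson_moves V E n p"
  shows "(a, b) = (u, v)"
proof -
  have ne: "u \<noteq> v" "a \<noteq> b" using G uv ab by (auto simp: simple_graph_def boson_moves_def)
  have eq: "n(a := n a - 1, b := n b + 1) = n(u := n u - 1, v := n v + 1)"
    and pos: "1 \<le> n a" using uv ab by (auto simp: boson_moves_def)
  have "b = v"
  proof (rule ccontr)
    assume "b \<noteq> v"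
    then have "n b + 1 = (if b = u then n u - 1 else n b)"
      using fun_cong[OF eq, of b] by simp
    then show False by (simp split: if_splits)
  qed
  moreover have "a = u"
  proof (rule ccontr)
    assume "a \<noteq> u"
    then have "n a - 1 = n a"
      using fun_cong[OF eq, of a] ne \<open>b = v\<close> by simp
    then show False using pos by simp
  qed
  ultimately show ?thesis by simp
qed

lemma boson_moves_empty_or_singleton:
  assumes "simple_graph V E"
  obtains "boson_moves V E n p = {}" | u v where "boson_moves V E n p = {(u, v)}"
proof (cases "boson_moves V E n p = {}")
  case False
  then obtain u v where "(u, v) \<in> boson_moves V E n p" by auto
  then have "boson_moves V E n p = {(u, v)}"
    using boson_move_unique[OF assms] by auto
  then show thesis by (rule that(2))
qed (rule that(1))

lemma boson_move_reverse:
  assumes G: "simple_graph V E" and uv: "(u, v) \<in> boson_moves V E n p"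
  shows "(v, u) \<in> boson_moves V E p n" and "p v = n v + 1"
proof -
  have ne: "u \<noteq> v" and "E v u" using G uv by (auto simp: simple_graph_def boson_moves_def)
  have p: "p = n(u := n u - 1, v := n v + 1)" and "1 \<le> n u" using uv by (auto simp: boson_moves_def)
  then have "n = p(v := p v - 1, u := p u + 1)"
    using ne by (auto simp: fun_eq_iff)
  then show "(v, u) \<in> boson_moves V E p n"
    using uv \<open>E v u\<close> p ne by (auto simp: boson_moves_def)
  show "p v = n v + 1" using p ne by simp
qed

lemma move_count_swap:
  assumes "simple_graph V E"
  shows "sqrt (real (move_count V E n p * move_count V E p n)) = feder_adj V E n p"
proof (cases rule: boson_moves_empty_or_singleton[OF assms, of n p])
  case 1
  then show ?thesis by (simp add: move_count_def feder_adj_eq_sum_boson_moves)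
next
  case (2 u v)
  then have rev: "(v, u) \<in> boson_moves V E p n" "p v = n v + 1"
    using boson_move_reverse[OF assms, of u v n p] by auto
  then have "boson_moves V E p n = {(v, u)}"
    using boson_move_unique[OF assms] by auto
  then show ?thesis using 2 rev by (simp add: move_count_def feder_adj_eq_sum_boson_moves)
qed

lemma neighbours_in_occupation_class:
  assumes G: "simple_graph V E" and x: "x \<in> cart_pow_verts V k"
  shows "{y \<in> occupation_class V k p. cart_pow_adj E k x y}
       = (\<Union>(u, v)\<in>boson_moves V E (occupation x) p. (\<lambda>i. x[i := v]) ` {i. i < k \<and> x ! i = u})"
    (is "?N = ?M")
proof
  have len: "length x = k" and setx: "set x \<subseteq> V" using x by (auto simp: cart_pow_verts_def)
  have irrefl: "\<not> E a a" and edge: "E a b \<Longrightarrow> a \<in> V \<and> b \<in> V" for a b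
    using G by (auto simp: simple_graph_def)
  show "?N \<subseteq> ?M"
  proof
    fix y assume "y \<in> ?N"
    then have "length y = k" "occupation y = p" "cart_pow_adj E k x y"
      by (auto simp: occupation_class_def cart_pow_verts_def)
    then obtain i where i: "i < k" "E (x ! i) (y ! i)" "y = x[i := y ! i]"
      using cart_pow_adj_iff_list_update len by blast
    have "x ! i \<noteq> y ! i" using i irrefl by metis
    then have "(x ! i, y ! i) \<in> boson_moves V E (occupation x) p"
      using i len edge occupation_list_update[of i x "y ! i"] occupation_nth_pos[of i x] \<open>occupation y = p\<close>
      by (auto simp: boson_moves_def)
    then show "y \<in> ?M" using i by blast
  qed
  show "?M \<subseteq> ?N"
  proof
    fix y assume "y \<in> ?M"
    then obtain u v i where uv: "(u, v) \<in> boson_moves V E (occupation x) p"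
      and i: "i < k" "x ! i = u" "y = x[i := v]" by auto
    have "u \<in> V" "v \<in> V" "E u v" "u \<noteq> v" and p: "p = (occupation x)(u := occupation x u - 1, v := occupation x v + 1)"
      using uv irrefl by (auto simp: boson_moves_def)
    then show "y \<in> ?N"
      using i len setx occupation_list_update[of i x v] cart_pow_adj_iff_list_update[of x k y E]
      by (auto simp: occupation_class_def cart_pow_verts_def dest: subsetD[OF set_update_subset_insert])
  qed
qed

lemma nbr_count_occupation_class:
  assumes G: "simple_graph V E" and x: "x \<in> cart_pow_verts V k"
  shows "nbr_count (cart_pow_adj E k) x (occupation_class V k p) = move_count V E (occupation x) p"
proof (cases rule: boson_moves_empty_or_singleton[OF G, of "occupation x" p])
  case 1
  then have "{y \<in> occupation_class V k p. cart_pow_adj E k x y} = {}"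
    using neighbours_in_occupation_class[OF G x, of p] by simp
  then show ?thesis using 1 unfolding nbr_count_def move_count_def by (metis card.empty sum.empty)
next
  case (2 u v)
  have len: "length x = k" using x by (simp add: cart_pow_verts_def)
  have "(u, v) \<in> boson_moves V E (occupation x) p" using 2 by simp
  then have "u \<noteq> v" using G by (auto simp: boson_moves_def simple_graph_def)
  then have "inj_on (\<lambda>i. x[i := v]) {i. i < k \<and> x ! i = u}"
    using len by (intro inj_onI) (metis (mono_tags, lifting) mem_Collect_eq nth_list_update_eq nth_list_update_neq)
  then show ?thesis
    using neighbours_in_occupation_class[OF G x, of p] 2 card_occupation_eq[of x u] len
    by (simp add: nbr_count_def move_count_def card_image)
qed

lemma orbit_partition_equitable:
  assumes G: "simple_graph V E"
  shows "equitable (cart_pow_verts V k) (cart_pow_adj E k) (orbit_partition V k)"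
  unfolding equitable_def
proof (intro conjI ballI impI)
  have fin: "finite V" using G by (simp add: simple_graph_def)
  note classes = orbit_partition_eq_occupation_classes[OF fin]
  show "\<Union>(orbit_partition V k) = cart_pow_verts V k"
    unfolding classes feder_verts_eq_image_occupation[OF fin] by (auto simp: occupation_class_def)
  show "C \<noteq> {}" if "C \<in> orbit_partition V k" for C
    using that occupation_class_nonempty[OF fin] unfolding classes by blast
  show "C \<inter> D = {}" if "C \<in> orbit_partition V k" "D \<in> orbit_partition V k" "C \<noteq> D" for C D
    using that unfolding classes by (auto simp: occupation_class_def)
  show "nbr_count (cart_pow_adj E k) x D = nbr_count (cart_pow_adj E k) x' D"
    if CD: "C \<in> orbit_partition V k" "D \<in> orbit_partition V k" and xx': "x \<in> C" "x' \<in> C"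
    for C D x x'
  proof -
    obtain n p where "C = occupation_class V k n" "D = occupation_class V k p"
      using CD unfolding classes by blast
    then show ?thesis
      using xx' nbr_count_occupation_class[OF G] by (simp add: occupation_class_def)
  qed
qed

lemma feder_iso_orbit_quotient:
  assumes G: "simple_graph V E"
  shows "wiso (feder_verts V k) (feder_adj V E) (orbit_partition V k) (quot_adj (cart_pow_adj E k))"
  unfolding wiso_def
proof (intro exI conjI ballI)
  have fin: "finite V" using G by (simp add: simple_graph_def)
  have "inj_on (occupation_class V k) (feder_verts V k)"
  proof (rule inj_onI)
    fix n p assume "n \<in> feder_verts V k" "occupation_class V k n = occupation_class V k p"
    then show "n = p"
      using occupation_class_nonempty[OF fin] by (auto simp: occupation_class_def)
  qed
  then show "bij_betw (occupation_class V k) (feder_verts V k) (orbit_partition V k)"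
    by (simp add: bij_betw_def orbit_partition_eq_occupation_classes[OF fin])
  have count: "nbr_count (cart_pow_adj E k) (SOME x. x \<in> occupation_class V k m) (occupation_class V k m')
      = move_count V E m m'" if "m \<in> feder_verts V k" for m m'
  proof -
    have "(SOME x. x \<in> occupation_class V k m) \<in> occupation_class V k m"
      using occupation_class_nonempty[OF fin that] by (simp add: some_in_eq)
    then show ?thesis
      using nbr_count_occupation_class[OF G] by (simp add: occupation_class_def)
  qed
  fix n p assume "n \<in> feder_verts V k" "p \<in> feder_verts V k"
  then show "quot_adj (cart_pow_adj E k) (occupation_class V k n) (occupation_class V k p) = feder_adj V E n p"
    by (simp add: quot_adj_def count move_count_swap[OF G] del: of_nat_mult)
qed

section \<open>Quantum walks on the quotient\<close>

definition occupation_weight :: "'a set \<Rightarrow> ('a \<Rightarrow> nat) \<Rightarrow> real" where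
  "occupation_weight V n = sqrt (real (\<Prod>a\<in>V. fact (n a)))"

lemma occupation_weight_nonzero: "occupation_weight V n \<noteq> 0"
  by (simp add: occupation_weight_def prod_pos less_imp_neq[symmetric])

lemma prod_fact_boson_move:
  assumes "finite V" "u \<in> V" "v \<in> V" "u \<noteq> v" "1 \<le> n u"
  defines "p \<equiv> n(u := n u - 1, v := n v + 1)"
  shows "(\<Prod>a\<in>V. fact (n a)) * (n v + 1) = (\<Prod>a\<in>V. fact (p a)) * (n u :: nat)"
proof -
  define R where "R = (\<Prod>a\<in>V - {u} - {v}. fact (n a) :: nat)"
  have R': "R = (\<Prod>a\<in>V - {u} - {v}. fact (p a))"
    unfolding R_def p_def by (intro prod.cong) auto
  have split: "(\<Prod>a\<in>V. f a) = f u * (f v * (\<Prod>a\<in>V - {u} - {v}. f a))" for f :: "'a \<Rightarrow> nat"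
    using assms by (simp add: prod.remove[of V u] prod.remove[of "V - {u}" v])
  have "fact (n u) = n u * fact (n u - 1)"
    using assms(5) by (simp add: fact_reduce)
  then show ?thesis
    unfolding split[of "\<lambda>a. fact (n a)"] split[of "\<lambda>a. fact (p a)"] R_def[symmetric] R'[symmetric]
    using assms(4) by (simp add: p_def algebra_simps)
qed

lemma move_count_eq_rescaled_feder_adj:
  assumes G: "simple_graph V E"
  shows "real (move_count V E n p) = feder_adj V E n p * occupation_weight V n / occupation_weight V p"
proof (cases rule: boson_moves_empty_or_singleton[OF G, of n p])
  case 1
  then show ?thesis by (simp add: move_count_def feder_adj_eq_sum_boson_moves)
next
  case (2 u v)
  then have uv: "u \<in> V" "v \<in> V" "E u v" "1 \<le> n u" "p = n(u := n u - 1, v := n v + 1)"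
    by (auto simp: boson_moves_def)
  have "finite V" "u \<noteq> v" using G uv(3) by (auto simp: simple_graph_def)
  define a where "a = real (n u)"
  define b where "b = real (n v + 1)"
  define P where "P = real (\<Prod>a\<in>V. fact (n a))"
  define Q where "Q = real (\<Prod>a\<in>V. fact (p a))"
  have e: "P * b = Q * a"
    using arg_cong[OF prod_fact_boson_move[of V u v n, OF \<open>finite V\<close> uv(1,2) \<open>u \<noteq> v\<close> uv(4)], of real] uv(5)
    by (simp add: P_def Q_def a_def b_def algebra_simps)
  have "sqrt (a * b) * sqrt P = sqrt (a * (P * b))"
    by (simp add: real_sqrt_mult[symmetric] mult_ac)
  also have "\<dots> = sqrt (a * a * Q)"
    using e by (simp add: mult_ac)
  also have "\<dots> = a * sqrt Q"
    by (simp add: real_sqrt_mult a_def)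
  finally have "sqrt (a * b) * sqrt P = a * sqrt Q" .
  moreover have "Q > 0" by (simp add: Q_def prod_pos)
  ultimately have "sqrt (a * b) * sqrt P / sqrt Q = a" by simp
  moreover have "feder_adj V E n p = sqrt (a * b)"
    unfolding a_def b_def of_nat_mult[symmetric] using 2 by (simp add: feder_adj_eq_sum_boson_moves)
  moreover have "real (move_count V E n p) = a"
    using 2 by (simp add: move_count_def a_def)
  moreover have "occupation_weight V n = sqrt P" "occupation_weight V p = sqrt Q"
    by (simp_all add: occupation_weight_def P_def Q_def)
  ultimately show ?thesis by simp
qed

lemma occupation_class_replicate:
  assumes "u \<in> V"
  shows "occupation_class V k (occupation (replicate k u)) = {replicate k u}"
proof -
  have "y = replicate k u" if len: "length y = k" and occ: "occupation y = occupation (replicate k u)" for y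
  proof -
    have "a = u" if "a \<in> set y" for a
    proof -
      have "count (mset y) a = (if a = u then k else 0)"
        using fun_cong[OF occ, of a] by (simp add: occupation_def)
      moreover have "0 < count (mset y) a" using that by simp
      ultimately show ?thesis by (cases "a = u") auto
    qed
    then have "replicate (length y) u = y" by (simp add: replicate_length_same)
    then show ?thesis using len by simp
  qed
  moreover have "replicate k u \<in> cart_pow_verts V k"
    using assms by (auto simp: cart_pow_verts_def)
  ultimately show ?thesis
    by (auto simp: occupation_class_def cart_pow_verts_def)
qed

lemma occupation_weight_replicate:
  assumes "finite V" "u \<in> V"
  shows "occupation_weight V (occupation (replicate k u)) = sqrt (fact k)"
proof -
  have "(\<Prod>a\<in>V. fact (occupation (replicate k u) a)) = (\<Prod>a\<in>V. if a = u then fact k else 1 :: nat)"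
    by (intro prod.cong) (auto simp: occupation_def)
  then show ?thesis
    using assms by (simp add: occupation_weight_def)
qed

lemma mpow_feder_replicate:
  assumes G: "simple_graph V E" and u: "u \<in> V" and v: "v \<in> V"
  shows "mpow (feder_verts V k) (feder_adj V E) m (occupation (replicate k v)) (occupation (replicate k u))
     = mpow (cart_pow_verts V k) (graph_adj (cart_pow_adj E k)) m (replicate k v) (replicate k u)"
proof -
  have fin: "finite V" using G by (simp add: simple_graph_def)
  have lump: "(\<Sum>z\<in>{z\<in>cart_pow_verts V k. occupation z = p}. graph_adj (cart_pow_adj E k) x z)
      = feder_adj V E (occupation x) p * occupation_weight V (occupation x) / occupation_weight V p"
    if "x \<in> cart_pow_verts V k" for x p
  proof -
    have "(\<Sum>z\<in>occupation_class V k p. graph_adj (cart_pow_adj E k) x z)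
        = real (nbr_count (cart_pow_adj E k) x (occupation_class V k p))"
      using finite_cart_pow_verts[OF fin, of k]
      by (simp add: graph_adj_def nbr_count_def occupation_class_def flip: sum.inter_filter)
    then show ?thesis
      using nbr_count_occupation_class[OF G that, of p] move_count_eq_rescaled_feder_adj[OF G]
      by (simp add: occupation_class_def)
  qed
  have "mpow (cart_pow_verts V k) (graph_adj (cart_pow_adj E k)) m (replicate k v) (replicate k u)
      = (\<Sum>y\<in>{y\<in>cart_pow_verts V k. occupation y = occupation (replicate k u)}.
           mpow (cart_pow_verts V k) (graph_adj (cart_pow_adj E k)) m (replicate k v) y)"
    using occupation_class_replicate[OF u] by (simp add: occupation_class_def)
  also have "\<dots> = mpow (feder_verts V k) (feder_adj V E) m (occupation (replicate k v)) (occupation (replicate k u))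
      * occupation_weight V (occupation (replicate k v)) / occupation_weight V (occupation (replicate k u))"
    using u v occupation_weight_nonzero
    by (intro mpow_lumping finite_cart_pow_verts feder_verts_eq_image_occupation fin lump
          occupation_in_feder_verts) (auto simp: cart_pow_verts_def less_irrefl)
  finally show ?thesis
    by (simp add: occupation_weight_replicate[OF fin u] occupation_weight_replicate[OF fin v])
qed

lemma pst_feder_if_pst:
  assumes G: "simple_graph V E" and k: "1 \<le> k" and pst: "pst V (graph_adj E)"
  shows "pst (feder_verts V k) (feder_adj V E)"
proof -
  have fin: "finite V" and irrefl: "\<And>a. \<not> E a a" using G by (auto simp: simple_graph_def)
  obtain u v t where uv: "u \<in> V" "v \<in> V" "u \<noteq> v" and t: "cmod (transition V (graph_adj E) t v u) = 1"
    using pst unfolding pst_def by blast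
  have "transition (feder_verts V k) (feder_adj V E) t (occupation (replicate k v)) (occupation (replicate k u))
      = transition (cart_pow_verts V k) (graph_adj (cart_pow_adj E k)) t (replicate k v) (replicate k u)"
    unfolding transition_def using mpow_feder_replicate[OF G uv(1,2)] by simp
  also have "\<dots> = transition V (graph_adj E) t v u ^ k"
    by (rule transition_cart_pow_replicate[OF fin irrefl uv(1,2)])
  finally have "cmod (transition (feder_verts V k) (feder_adj V E) t
      (occupation (replicate k v)) (occupation (replicate k u))) = 1"
    using t by (simp add: norm_power)
  moreover have "occupation (replicate k u) \<noteq> occupation (replicate k v)"
    using k uv(3) by (auto simp: occupation_def fun_eq_iff dest: spec[of _ u])
  moreover have "occupation (replicate k w) \<in> feder_verts V k" if "w \<in> V" for w
    using that fin by (intro occupation_in_feder_verts) (auto simp: cart_pow_verts_def)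
  ultimately show ?thesis
    unfolding pst_def using uv by blast
qed

theorem theorem3:
  fixes V :: "'a set" and E :: "'a \<Rightarrow> 'a \<Rightarrow> bool" and k :: nat
  assumes "simple_graph V E" and "1 \<le> k"
  shows "equitable (cart_pow_verts V k) (cart_pow_adj E k) (orbit_partition V k)
       \<and> wiso (feder_verts V k) (feder_adj V E)
              (orbit_partition V k) (quot_adj (cart_pow_adj E k))
       \<and> (pst V (graph_adj E) \<longrightarrow> pst (feder_verts V k) (feder_adj V E))"
  using orbit_partition_equitable[OF assms(1)] feder_iso_orbit_quotient[OF assms(1)]
    pst_feder_if_pst[OF assms] by blast

end
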